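(* Let $(\mathcal{X},\rho)$ be a metric space, let $L>0$, and let $\mathcal{F}$ be the collection of all functions $f:\mathcal{X}\to\mathbb{R}$ with Lipschitz constant at most $L$. Then for every $\gamma>0$, $\mathrm{fat}_\gamma(\mathcal{F})=\mathrm{fat}^0_\gamma(\mathcal{F})$.
   Context: For a collection $\mathcal{F}$ of functions $\mathcal{X}\to\mathbb{R}$ and $\gamma>0$: a finite set $X\subset\mathcal{X}$ is $\gamma$-shattered by $\mathcal{F}$ if there exists $r:X\to\mathbb{R}$ such that for every labeling $y\in\{-1,1\}^X$ there is $f\in\mathcal{F}$ with $y(x)(f(x)-r(x))\ge\gamma$ for all $x\in X$. The set $X$ is $\gamma$-shattered at zero by $\mathcal{F}$ if this holds with $r\equiv 0$, i.e. for every $y\in\{-1,1\}^X$ there is $f\in\mathcal{F}$ with $y(x)f(x)\ge\gamma$ for all $x\in X$. $\mathrm{fat}_\gamma(\mathcal{F})$ (the $\gamma$-fat-shattering dimension) is the largest cardinality of a set $\gamma$-shattered by $\mathcal{F}$, and $\mathrm{fat}^0_\gamma(\mathcal{F})$ is the largest cardinality of a set $\gamma$-shattered at zero by $\mathcal{F}$. The Lipschitz constant of $f$ is the smallest $L\ge 0$ with $|f(x)-f(x')|\le L\rho(x,x')$ for all $x,x'$. *)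

theory Defs
  imports "HOL-Analysis.Analysis" "HOL-Library.Extended_Nat"
begin

definition gamma_shattered :: "('a \<Rightarrow> real) set \<Rightarrow> real \<Rightarrow> 'a set \<Rightarrow> bool" where
  "gamma_shattered F \<gamma> X \<longleftrightarrow> finite X \<and>
     (\<exists>r :: 'a \<Rightarrow> real. \<forall>y :: 'a \<Rightarrow> real. (\<forall>x\<in>X. y x \<in> {-1, 1}) \<longrightarrow>
        (\<exists>f\<in>F. \<forall>x\<in>X. y x * (f x - r x) \<ge> \<gamma>))"

definition gamma_shattered_zero :: "('a \<Rightarrow> real) set \<Rightarrow> real \<Rightarrow> 'a set \<Rightarrow> bool" where
  "gamma_shattered_zero F \<gamma> X \<longleftrightarrow> finite X \<and>
     (\<forall>y :: 'a \<Rightarrow> real. (\<forall>x\<in>X. y x \<in> {-1, 1}) \<longrightarrow>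
        (\<exists>f\<in>F. \<forall>x\<in>X. y x * f x \<ge> \<gamma>))"

definition fat :: "('a \<Rightarrow> real) set \<Rightarrow> real \<Rightarrow> enat" where
  "fat F \<gamma> = Sup ((\<lambda>X. enat (card X)) ` {X. gamma_shattered F \<gamma> X})"

definition fat0 :: "('a \<Rightarrow> real) set \<Rightarrow> real \<Rightarrow> enat" where
  "fat0 F \<gamma> = Sup ((\<lambda>X. enat (card X)) ` {X. gamma_shattered_zero F \<gamma> X})"

end

theory Submission
  imports Defs
begin

text \<open>If f realises a sign pattern y around the witness r and h realises -y, then (f - h)/2
  realises y around zero: the witness cancels. So shattering and shattering at zero coincide for
  any class closed under half-differences, as the L-Lipschitz functions are.\<close>

lemma gamma_shattered_zero_imp_gamma_shattered:
  "gamma_shattered_zero F \<gamma> X \<Longrightarrow> gamma_shattered F \<gamma> X"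
  unfolding gamma_shattered_def gamma_shattered_zero_def
  by (intro conjI exI[of _ "\<lambda>_. 0"]) auto

lemma gamma_shattered_imp_gamma_shattered_zero:
  assumes half_diff: "\<And>f h. f \<in> F \<Longrightarrow> h \<in> F \<Longrightarrow> (\<lambda>x. (f x - h x) / 2) \<in> F"
    and "gamma_shattered F \<gamma> X"
  shows "gamma_shattered_zero F \<gamma> X"
proof -
  from \<open>gamma_shattered F \<gamma> X\<close> obtain r where fin: "finite X"
    and r: "\<And>y. \<forall>x\<in>X. y x \<in> {-1, 1} \<Longrightarrow> \<exists>f\<in>F. \<forall>x\<in>X. \<gamma> \<le> y x * (f x - r x)"
    unfolding gamma_shattered_def by blast
  show ?thesis
    unfolding gamma_shattered_zero_def
  proof (intro conjI fin allI impI)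
    fix y :: "'a \<Rightarrow> real"
    assume y: "\<forall>x\<in>X. y x \<in> {-1, 1}"
    obtain f where f: "f \<in> F" "\<forall>x\<in>X. \<gamma> \<le> y x * (f x - r x)"
      using r[OF y] by blast
    obtain h where h: "h \<in> F" "\<forall>x\<in>X. \<gamma> \<le> - y x * (h x - r x)"
      using r[of "\<lambda>x. - y x"] y by auto
    define g where "g x = (f x - h x) / 2" for x
    have "\<forall>x\<in>X. \<gamma> \<le> y x * g x"
      unfolding g_def
    proof
      fix x assume "x \<in> X"
      with f(2) h(2) have "\<gamma> + \<gamma> \<le> y x * (f x - r x) + - y x * (h x - r x)"
        by (meson add_mono)
      then show "\<gamma> \<le> y x * ((f x - h x) / 2)"
        by (simp add: algebra_simps)
    qed
    moreover have "g \<in> F"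
      using half_diff[OF f(1) h(1)] by (simp add: g_def[abs_def])
    ultimately show "\<exists>g\<in>F. \<forall>x\<in>X. \<gamma> \<le> y x * g x"
      by blast
  qed
qed

lemma gamma_shattered_iff_gamma_shattered_zero:
  assumes "\<And>f h. f \<in> F \<Longrightarrow> h \<in> F \<Longrightarrow> (\<lambda>x. (f x - h x) / 2) \<in> F"
  shows "gamma_shattered F \<gamma> X \<longleftrightarrow> gamma_shattered_zero F \<gamma> X"
proof
  show "gamma_shattered F \<gamma> X \<Longrightarrow> gamma_shattered_zero F \<gamma> X"
    using assms by (rule gamma_shattered_imp_gamma_shattered_zero)
qed (rule gamma_shattered_zero_imp_gamma_shattered)

lemma fat_eq_fat0:
  assumes "\<And>f h. f \<in> F \<Longrightarrow> h \<in> F \<Longrightarrow> (\<lambda>x. (f x - h x) / 2) \<in> F"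
  shows "fat F \<gamma> = fat0 F \<gamma>"
proof -
  have "{X. gamma_shattered F \<gamma> X} = {X. gamma_shattered_zero F \<gamma> X}"
    by (rule Collect_cong) (rule gamma_shattered_iff_gamma_shattered_zero[OF assms])
  then show ?thesis
    unfolding fat_def fat0_def by (rule arg_cong)
qed

lemma lipschitz_on_half_diff:
  fixes f h :: "'a::metric_space \<Rightarrow> real"
  assumes "L-lipschitz_on S f" and "L-lipschitz_on S h"
  shows "L-lipschitz_on S (\<lambda>x. (f x - h x) / 2)"
proof -
  have "(L + L)-lipschitz_on S (\<lambda>x. f x + - h x)"
    using assms by (intro lipschitz_on_add lipschitz_on_minus)
  then have "(1 / 2 * (L + L))-lipschitz_on S (\<lambda>x. 1 / 2 * (f x + - h x))"
    by (rule lipschitz_on_cmult_real_nonneg) simp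
  moreover have "1 / 2 * (L + L) = L" and "(\<lambda>x. 1 / 2 * (f x + - h x)) = (\<lambda>x. (f x - h x) / 2)"
    by auto
  ultimately show ?thesis
    by (simp only:)
qed

theorem mainTheorem1:
  fixes L \<gamma> :: real
  assumes "L > 0" and "\<gamma> > 0"
  shows "fat {f :: 'a::metric_space \<Rightarrow> real. L-lipschitz_on UNIV f} \<gamma>
       = fat0 {f :: 'a::metric_space \<Rightarrow> real. L-lipschitz_on UNIV f} \<gamma>"
  by (rule fat_eq_fat0) (use lipschitz_on_half_diff in blast)

end
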